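(* Consider the network formation algorithm with strategy constraint described in the context, with any fixed positive integer threshold $\sigma$. For any initial transmission graph $G_0$ there exists a positive integer $T$ such that the algorithm converges (i.e. the transmission graph stops changing) after $T$ iterations.
   Context: Setting: a finite set $\mathcal{N}$ of $N$ on-board units (OBUs) and one roadside unit (RSU), node set $\mathcal{V}=\mathcal{N}\cup\{RSU\}$. A transmission graph is a directed graph $G(\mathcal{V},\mathcal{E})$ in which every OBU $i$ has in-degree $\lambda^{in}_i\le1$ and out-degree $\lambda^{out}_i\le1$ and the RSU has in-degree $0$; $\mathcal{G}$ denotes the (finite) set of all such graphs. Given data: a finite packet set $\mathcal{M}$, packet sets $\mathcal{M}_i\subseteq\mathcal{M}$ held by OBUs, packet size $s>0$, slot length $T_{s}>0$, neighbor sets $\mathcal{N}_i\subseteq\mathcal{N}$, nonnegative rates $R^*_{j,i}$ (OBU $j$ to OBU $i$) and $c_i$ (RSU to $i$), success probabilities $P_{j,i}\in[0,1]$, and pricing factors $\gamma_{in},\gamma_{out},\gamma_{cost}>0$. Utility of OBU $i$: $U_i(G)=U^{in}_i(G)+U^{out}_i(G)-C_i$, where $U^{in}_i(G)=\gamma_{in}P_{j,i}\min(R^*_{j,i}T_s/s,\,|(\mathcal{M}\setminus\mathcal{M}_i)\cap\mathcal{M}_j|)$ if $e_{j,i}\in\mathcal{E}$ with $j\in\mathcal{N}$, $=\gamma_{in}c_iT_s/s$ if $e_{RSU,i}\in\mathcal{E}$, and $=0$ if $\lambda^{in}_i=0$; $U^{out}_i(G)=\gamma_{out}P_{i,j}\min(R^*_{i,j}T_s/s,\,|(\mathcal{M}\setminus\mathcal{M}_j)\cap\mathcal{M}_i|)$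 if $e_{i,j}\in\mathcal{E}$, and $0$ if $\lambda^{out}_i=0$; $C_i=\gamma_{cost}\lambda^{out}_i|\mathcal{N}_i|+\gamma_{cost}\lambda^{in}_i|\mathcal{N}_j|$ if $e_{j,i}\in\mathcal{E}$ with $j\in\mathcal{N}$, and $C_i=\gamma_{cost}\lambda^{out}_i|\mathcal{N}_i|$ otherwise. Strategies: OBU $i$'s strategy/state is $s_i=(a_i,b_i)$, $a_i\in\mathcal{N}\cup\{RSU\}$ (node transmitting to $i$; $a_i=i$ means none), $b_i\in\mathcal{N}$ (OBU $i$ transmits to; $b_i=i$ means none); $S_i$ is the set of all such pairs. Switching from $(a_i,b_i)$ to $(a_i',b_i')$ turns $G$ into $G'$ with $\mathcal{E}'=(\mathcal{E}\setminus\{e_{a_i,i},e_{i,b_i}\})\cup\{e_{a_i',i},e_{i,b_i'}\}$. It is a feasible local strategy iff $U_i(G')\ge U_i(G)$, $U_{a_i'}(G')\ge U_{a_i'}(G)$ when $a_i'\in\mathcal{N}\setminus\{i,a_i\}$, and $U_{b_i'}(G')\ge U_{b_i'}(G)$ when $b_i'\notin\{i,b_i\}$; $F_i$ is the set of feasible local strategies. A local best response of $i$ is a strategy in a given feasible set maximizing $U_i$ of the resulting graph while the others keep their strategies. Algorithm with strategy constraint: each OBU keeps a history function $h^t_i(s_i)$ counting how many times it used strategy $s_i\in S_i$ in the first $t$ iterations (initially $0$). In iteration $t+1$, a randomly chosen OBU $i$ computes $F_i$, sets $F_i'=F_i\setminus\{s_i: h^t_i(s_i)\ge\sigma\}$,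 chooses a local best response $s_i^*=(a_i^*,b_i^* )$ from $F_i'$, sets $h^{t+1}_i(s_i^* )=h^t_i(s_i^* )+1$ and leaves other counts unchanged, and updates the graph via $\mathcal{E}^{t+1}=(\mathcal{E}^t\setminus\{e_{a_i,i},e_{i,b_i}\})\cup\{e_{a_i^*,i},e_{i,b_i^*}\}$. This is repeated until the graph converges. *)

theory Defs
  imports Main "HOL.Real"
begin

record ('v, 'p) netdata =
  obus     :: "'v set"
  rsu      :: "'v"
  pkts     :: "'p set"
  held     :: "'v \<Rightarrow> 'p set"
  psize    :: real
  slot     :: real
  nbrs     :: "'v \<Rightarrow> 'v set"
  rate     :: "'v \<Rightarrow> 'v \<Rightarrow> real" \<comment> \<open>rate j i = R*_{j,i}\<close>
  rsu_rate :: "'v \<Rightarrow> real"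
  succ     :: "'v \<Rightarrow> 'v \<Rightarrow> real" \<comment> \<open>succ j i = P_{j,i}\<close>
  g_in     :: real
  g_out    :: real
  g_cost   :: real

definition valid_data :: "('v, 'p) netdata \<Rightarrow> bool" where
  "valid_data d \<longleftrightarrow>
     finite (obus d) \<and> rsu d \<notin> obus d \<and> finite (pkts d) \<and>
     (\<forall>i\<in>obus d. held d i \<subseteq> pkts d \<and> nbrs d i \<subseteq> obus d) \<and>
     psize d > 0 \<and> slot d > 0 \<and>
     (\<forall>i j. rate d j i \<ge> 0) \<and> (\<forall>i. rsu_rate d i \<ge> 0) \<and>
     (\<forall>i j. 0 \<le> succ d j i \<and> succ d j i \<le> 1) \<and>
     g_in d > 0 \<and> g_out d > 0 \<and> g_cost d > 0"

type_synonym 'v graph = "('v \<times> 'v) set"   \<comment> \<open>edge set; (j,i) is e_{j,i}\<close>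

definition nodes :: "('v, 'p) netdata \<Rightarrow> 'v set" where
  "nodes d = insert (rsu d) (obus d)"

definition indeg :: "'v graph \<Rightarrow> 'v \<Rightarrow> nat" where
  "indeg E i = card {j. (j, i) \<in> E}"

definition outdeg :: "'v graph \<Rightarrow> 'v \<Rightarrow> nat" where
  "outdeg E i = card {j. (i, j) \<in> E}"

definition trans_graph :: "('v, 'p) netdata \<Rightarrow> 'v graph \<Rightarrow> bool" where
  "trans_graph d E \<longleftrightarrow>
     E \<subseteq> nodes d \<times> nodes d \<and> (\<forall>v. (v, v) \<notin> E) \<and>
     (\<forall>i\<in>obus d. indeg E i \<le> 1 \<and> outdeg E i \<le> 1) \<and>
     indeg E (rsu d) = 0"

text \<open>Strategy of OBU i read off the graph: a_i (transmitter to i, or i if none),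
  b_i (receiver of i, or i if none).\<close>
definition strat_a :: "'v graph \<Rightarrow> 'v \<Rightarrow> 'v" where
  "strat_a E i = (if \<exists>j. (j, i) \<in> E then (THE j. (j, i) \<in> E) else i)"

definition strat_b :: "'v graph \<Rightarrow> 'v \<Rightarrow> 'v" where
  "strat_b E i = (if \<exists>j. (i, j) \<in> E then (THE j. (i, j) \<in> E) else i)"

definition strategies :: "('v, 'p) netdata \<Rightarrow> 'v \<Rightarrow> ('v \<times> 'v) set" where
  "strategies d i = nodes d \<times> obus d"

text \<open>Switching OBU i to strategy (a',b'): edges e_{i,i} mean "no edge".\<close>
definition switch :: "'v graph \<Rightarrow> 'v \<Rightarrow> 'v \<times> 'v \<Rightarrow> 'v graph" where
  "switch E i s =
     (E - {(strat_a E i, i), (i, strat_b E i)}) \<union> ({(fst s, i), (i, snd s)} - {(i, i)})"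

definition lam_in :: "'v graph \<Rightarrow> 'v \<Rightarrow> real" where
  "lam_in E i = real (indeg E i)"

definition lam_out :: "'v graph \<Rightarrow> 'v \<Rightarrow> real" where
  "lam_out E i = real (outdeg E i)"

definition U_in :: "('v, 'p) netdata \<Rightarrow> 'v graph \<Rightarrow> 'v \<Rightarrow> real" where
  "U_in d E i =
    (if indeg E i = 0 then 0
     else let j = strat_a E i in
       if j = rsu d then g_in d * rsu_rate d i * slot d / psize d
       else g_in d * succ d j i *
              min (rate d j i * slot d / psize d)
                  (real (card ((pkts d - held d i) \<inter> held d j))))"

definition U_out :: "('v, 'p) netdata \<Rightarrow> 'v graph \<Rightarrow> 'v \<Rightarrow> real" where
  "U_out d E i =
    (if outdeg E i = 0 then 0
     else let j = strat_b E i in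
       g_out d * succ d i j *
         min (rate d i j * slot d / psize d)
             (real (card ((pkts d - held d j) \<inter> held d i))))"

definition cost :: "('v, 'p) netdata \<Rightarrow> 'v graph \<Rightarrow> 'v \<Rightarrow> real" where
  "cost d E i =
    (let j = strat_a E i in
     if indeg E i \<noteq> 0 \<and> j \<in> obus d
     then g_cost d * lam_out E i * real (card (nbrs d i))
          + g_cost d * lam_in E i * real (card (nbrs d j))
     else g_cost d * lam_out E i * real (card (nbrs d i)))"

definition utility :: "('v, 'p) netdata \<Rightarrow> 'v graph \<Rightarrow> 'v \<Rightarrow> real" where
  "utility d E i = U_in d E i + U_out d E i - cost d E i"

text \<open>Feasible local strategies F_i (the resulting graph is required to be a
  transmission graph, since utilities are only defined on \<G>).\<close>
definition feasible :: "('v, 'p) netdata \<Rightarrow> 'v graph \<Rightarrow> 'v \<Rightarrow> ('v \<times> 'v) set" where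
  "feasible d E i =
    {s \<in> strategies d i.
       let E' = switch E i s; a' = fst s; b' = snd s in
       trans_graph d E' \<and>
       utility d E' i \<ge> utility d E i \<and>
       (a' \<in> obus d - {i, strat_a E i} \<longrightarrow> utility d E' a' \<ge> utility d E a') \<and>
       (b' \<notin> {i, strat_b E i} \<longrightarrow> utility d E' b' \<ge> utility d E b')}"

definition local_best :: "('v, 'p) netdata \<Rightarrow> 'v graph \<Rightarrow> 'v \<Rightarrow> ('v \<times> 'v) set \<Rightarrow> 'v \<times> 'v \<Rightarrow> bool" where
  "local_best d E i F s \<longleftrightarrow>
     s \<in> F \<and> (\<forall>s'\<in>F. utility d (switch E i s') i \<le> utility d (switch E i s) i)"

text \<open>Algorithm state: current graph and history functions h_i(s_i).\<close>
type_synonym 'v algstate = "'v graph \<times> ('v \<Rightarrow> 'v \<times> 'v \<Rightarrow> nat)"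

definition alg_step :: "('v, 'p) netdata \<Rightarrow> nat \<Rightarrow> 'v algstate \<Rightarrow> 'v algstate \<Rightarrow> bool" where
  "alg_step d \<sigma> st st' \<longleftrightarrow>
     (\<exists>i\<in>obus d.
        let E = fst st; h = snd st;
            F' = {s \<in> feasible d E i. h i s < \<sigma>} in
        (F' = {} \<and> st' = st) \<or>
        (\<exists>s. local_best d E i F' s \<and>
             st' = (switch E i s, h(i := (h i)(s := h i s + 1)))))"

definition alg_run :: "('v, 'p) netdata \<Rightarrow> nat \<Rightarrow> 'v graph \<Rightarrow> (nat \<Rightarrow> 'v algstate) \<Rightarrow> bool" where
  "alg_run d \<sigma> E0 r \<longleftrightarrow>
     r 0 = (E0, \<lambda>_ _. 0) \<and> (\<forall>t. alg_step d \<sigma> (r t) (r (Suc t)))"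

end

theory Submission
  imports Defs
begin

text \<open>Every iteration that changes the state increments exactly one history count
  h_i(s) from a value below \<sigma>. The total history over the finitely many pairs (i, s)
  is therefore a potential that never decreases, grows with every change and is
  bounded by \<sigma> times the number of pairs; once it reaches its maximum the state,
  and with it the graph, is frozen. Neither the utilities nor the feasibility
  conditions play any role.\<close>

lemma eventually_stationary_if_bounded_potential:
  fixes r :: "nat \<Rightarrow> 'a" and \<Phi> :: "'a \<Rightarrow> nat"
  assumes step: "\<And>t. r (Suc t) = r t \<or> \<Phi> (r t) < \<Phi> (r (Suc t))"
    and bounded: "\<And>t. \<Phi> (r t) \<le> B"
  shows "\<exists>T. \<forall>t\<ge>T. r t = r T"
proof -
  have "\<Phi> (r t) \<le> \<Phi> (r (Suc t))" for t
    using step[of t] by auto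
  then have mono: "\<Phi> (r a) \<le> \<Phi> (r b)" if "a \<le> b" for a b
    using lift_Suc_mono_le[of "\<Phi> \<circ> r", OF _ that] by simp
  have fin: "finite (range (\<Phi> \<circ> r))"
    by (rule finite_subset[of _ "{..B}"]) (auto simp: bounded)
  obtain T where T: "\<Phi> (r T) = Max (range (\<Phi> \<circ> r))"
    using Max_in[OF fin] by auto
  have stationary: "r (Suc t) = r t" if "T \<le> t" for t
    using step[of t] mono[OF that] T Max_ge[OF fin, of "\<Phi> (r (Suc t))"] by auto
  have "r t = r T" if "T \<le> t" for t
    using that by (induction t rule: dec_induct) (auto simp: stationary)
  then show ?thesis by blast
qed

lemma sum_prod_fun_upd_Suc:
  fixes h :: "'a \<Rightarrow> 'b \<Rightarrow> nat"
  assumes "finite P" and "(i, s) \<in> P"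
  shows "(\<Sum>(j, u)\<in>P. (h(i := (h i)(s := h i s + 1))) j u) = (\<Sum>(j, u)\<in>P. h j u) + 1"
proof -
  have "(\<Sum>(j, u)\<in>P. (h(i := (h i)(s := h i s + 1))) j u)
      = (\<Sum>x\<in>P. (case x of (j, u) \<Rightarrow> h j u) + (if x = (i, s) then 1 else 0))"
    by (intro sum.cong) (auto split: if_splits)
  also have "\<dots> = (\<Sum>(j, u)\<in>P. h j u) + 1"
    using assms by (simp add: sum.distrib)
  finally show ?thesis .
qed

definition history_total :: "('v, 'p) netdata \<Rightarrow> 'v algstate \<Rightarrow> nat" where
  "history_total d st = (\<Sum>(i, s)\<in>Sigma (obus d) (strategies d). snd st i s)"

lemma alg_step_stays_or_counts:
  assumes "alg_step d \<sigma> st st'"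
  obtains "st' = st"
  | i s where "i \<in> obus d" "s \<in> strategies d i" "snd st i s < \<sigma>"
      "snd st' = (snd st)(i := (snd st i)(s := snd st i s + 1))"
proof -
  obtain E h where st: "st = (E, h)" by (cases st)
  from assms obtain i where i: "i \<in> obus d" and
    "({s \<in> feasible d E i. h i s < \<sigma>} = {} \<and> st' = st) \<or>
     (\<exists>s. local_best d E i {s \<in> feasible d E i. h i s < \<sigma>} s \<and>
        st' = (switch E i s, h(i := (h i)(s := h i s + 1))))"
    unfolding alg_step_def st by (auto simp: Let_def)
  then consider "st' = st"
    | s where "s \<in> feasible d E i" "h i s < \<sigma>"
        "st' = (switch E i s, h(i := (h i)(s := h i s + 1)))"
    unfolding local_best_def by blast
  then show thesis
  proof cases
    case (2 s)
    have "s \<in> strategies d i" using \<open>s \<in> feasible d E i\<close> by (simp add: feasible_def)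
    with i 2 st show thesis by (intro that(2)) simp_all
  qed (rule that(1))
qed

lemma alg_step_history_total:
  assumes "finite (Sigma (obus d) (strategies d))" and "alg_step d \<sigma> st st'"
  shows "st' = st \<or> history_total d st < history_total d st'"
  using assms(2)
proof (cases rule: alg_step_stays_or_counts)
  case (2 i s)
  then show ?thesis
    using sum_prod_fun_upd_Suc[OF assms(1), of i s "snd st"]
    by (simp add: history_total_def)
qed simp

lemma alg_run_history_le:
  assumes "alg_run d \<sigma> E0 r"
  shows "snd (r t) i s \<le> \<sigma>"
proof (induction t arbitrary: i s)
  case 0
  then show ?case using assms by (simp add: alg_run_def)
next
  case (Suc t)
  have "alg_step d \<sigma> (r t) (r (Suc t))" using assms by (simp add: alg_run_def)
  then show ?case
    by (cases rule: alg_step_stays_or_counts) (use Suc in auto)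
qed

lemma alg_run_history_total_le:
  assumes "finite (Sigma (obus d) (strategies d))" and "alg_run d \<sigma> E0 r"
  shows "history_total d (r t) \<le> card (Sigma (obus d) (strategies d)) * \<sigma>"
proof -
  have "history_total d (r t) \<le> (\<Sum>_\<in>Sigma (obus d) (strategies d). \<sigma>)"
    unfolding history_total_def
    by (intro sum_mono) (auto simp: alg_run_history_le[OF assms(2)])
  then show ?thesis by simp
qed

theorem theorem1:
  fixes d :: "('v, 'p) netdata" and \<sigma> :: nat and E0 :: "'v graph"
    and r :: "nat \<Rightarrow> 'v algstate"
  assumes "valid_data d"
    and "\<sigma> > 0"
    and "trans_graph d E0"
    and "alg_run d \<sigma> E0 r"
  shows "\<exists>T > 0. \<forall>t \<ge> T. fst (r t) = fst (r T)"
proof -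
  have fin: "finite (Sigma (obus d) (strategies d))"
    using assms(1) by (simp add: strategies_def valid_data_def nodes_def)
  have "\<exists>T. \<forall>t\<ge>T. r t = r T"
  proof (rule eventually_stationary_if_bounded_potential[of r "history_total d"])
    show "r (Suc t) = r t \<or> history_total d (r t) < history_total d (r (Suc t))" for t
    proof (rule alg_step_history_total[OF fin])
      show "alg_step d \<sigma> (r t) (r (Suc t))" using assms(4) by (simp add: alg_run_def)
    qed
    show "history_total d (r t) \<le> card (Sigma (obus d) (strategies d)) * \<sigma>" for t
      by (rule alg_run_history_total_le[OF fin assms(4)])
  qed
  then obtain T where T: "\<And>t. T \<le> t \<Longrightarrow> r t = r T" by blast
  have "fst (r t) = fst (r (Suc T))" if "Suc T \<le> t" for t
    using T[of t] T[of "Suc T"] that by simp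
  then show ?thesis by blast
qed

end
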